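(* Let $m\ge2$ be an integer and let $X$ be the conjugacy class of all transpositions in $S_m$, viewed as a quandle under conjugation $x^y=y^{-1}xy$. Then for every positive integer $n$ and every $s\in X^n$ whose entries generate $X$, the restriction to the stabilizer of $s$ in $B_n$ of the homomorphism $B_n\to S_n$ is surjective.
   Context: Entries generate $X$ if no proper subset of $X$ closed under $x^y$ contains them all. $B_n$ acts on $X^n$ from the right by $(\dots,x_i,x_{i+1},\dots)^{\sigma_i}=(\dots,x_{i+1},x_i^{x_{i+1}},\dots)$, and $B_n\to S_n$ sends $\sigma_i\mapsto(i\ i+1)$. *)

theory Defs
  imports "HOL-Combinatorics.Combinatorics"
begin

text \<open>Elements of S_m are bijections of nat permuting {0..<m} (fixing all other points).
  The quandle X of transpositions in S_m, with x^y = y^-1 x y.\<close>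

definition transp_quandle :: "nat \<Rightarrow> (nat \<Rightarrow> nat) set" where
  "transp_quandle m = {Transposition.transpose a b | a b. a < m \<and> b < m \<and> a \<noteq> b}"

definition qop :: "(nat \<Rightarrow> nat) \<Rightarrow> (nat \<Rightarrow> nat) \<Rightarrow> (nat \<Rightarrow> nat)" where
  "qop x y = inv y \<circ> x \<circ> y"

text \<open>Inverse of right multiplication by y: qinv (qop x y) y = x.\<close>
definition qinv :: "(nat \<Rightarrow> nat) \<Rightarrow> (nat \<Rightarrow> nat) \<Rightarrow> (nat \<Rightarrow> nat)" where
  "qinv z y = y \<circ> z \<circ> inv y"

definition generates :: "(nat \<Rightarrow> nat) set \<Rightarrow> (nat \<Rightarrow> nat) list \<Rightarrow> bool" where
  "generates X s \<longleftrightarrow>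
     (\<forall>Y. Y \<subseteq> X \<and> (\<forall>x\<in>Y. \<forall>y\<in>Y. qop x y \<in> Y) \<and> set s \<subseteq> Y \<longrightarrow> Y = X)"

text \<open>Braids in B_n are represented by words in the Artin generators:
  a letter (i, True) is sigma_(i+1), (i, False) is its inverse (0-indexed positions, i+1 < n).
  Every element of B_n is represented by such a word.\<close>
type_synonym braid_word = "(nat \<times> bool) list"

definition braid_word :: "nat \<Rightarrow> braid_word \<Rightarrow> bool" where
  "braid_word n w \<longleftrightarrow> (\<forall>g\<in>set w. Suc (fst g) < n)"

fun act_gen :: "(nat \<Rightarrow> nat) list \<Rightarrow> nat \<times> bool \<Rightarrow> (nat \<Rightarrow> nat) list" where
  "act_gen s (i, True) = s[i := s ! Suc i, Suc i := qop (s ! i) (s ! Suc i)]"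
| "act_gen s (i, False) = s[i := qinv (s ! Suc i) (s ! i), Suc i := s ! i]"

definition act :: "(nat \<Rightarrow> nat) list \<Rightarrow> braid_word \<Rightarrow> (nat \<Rightarrow> nat) list" where
  "act s w = foldl act_gen s w"

fun braid_perm :: "braid_word \<Rightarrow> nat \<Rightarrow> nat" where
  "braid_perm [] = id"
| "braid_perm (g # w) = Transposition.transpose (fst g) (Suc (fst g)) \<circ> braid_perm w"

end

theory Submission
  imports Defs
begin

(* Let H be the image of the stabilizer of s in S_n; it is closed under composition.
   Overlapping transpositions x, y satisfy the braid relation x y x = y x y, and then the cube
   of the band generator joining positions j and k fixes any tuple with x at j and y at k,
   while it maps to (j k)^3 = (j k).  So (j k) is in H whenever s_j and s_k move a common point.
   The positions k with (0 k) in H are closed under this overlap relation.  If they were not all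
   positions, the transpositions preserving the set V of points moved by their entries would form
   a subquandle containing every entry of s, but not the transposition joining V to a point
   moved by some other entry, contradicting generation.  Hence H contains every (0 k), hence
   every transposition, hence all of S_n. *)

abbreviation tr :: "nat \<Rightarrow> nat \<Rightarrow> nat \<Rightarrow> nat" where
  "tr \<equiv> Transposition.transpose"

lemma inv_involution: "x \<circ> x = id \<Longrightarrow> inv x = x"
  by (rule inv_unique_comp)

lemma comp_involution_cancel: "x \<circ> x = id \<Longrightarrow> f \<circ> x \<circ> x = f"
  by (simp add: comp_assoc)

lemma transpose_in_trans:
  assumes "id \<in> H" "\<And>p q. p \<in> H \<Longrightarrow> q \<in> H \<Longrightarrow> p \<circ> q \<in> H"
    and "tr a b \<in> H" "tr b c \<in> H"
  shows "tr a c \<in> H"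
proof (cases "a = c \<or> a = b \<or> b = c")
  case True
  then show ?thesis
    using assms(1,3,4) by auto
next
  case False
  then have "tr a c = tr a b \<circ> tr b c \<circ> tr a b"
    by (simp add: transpose_comp_triple)
  then show ?thesis
    using assms(2-4) by metis
qed

lemma permutes_in_if_transpositions_in:
  assumes "id \<in> H" "\<And>p q. p \<in> H \<Longrightarrow> q \<in> H \<Longrightarrow> p \<circ> q \<in> H"
    and "\<And>a b. a \<in> S \<Longrightarrow> b \<in> S \<Longrightarrow> tr a b \<in> H"
    and "finite S" "p permutes S"
  shows "p \<in> H"
  using assms(5,4)
proof (induction rule: permutes_induct)
  case id
  then show ?case
    using assms(1) .
next
  case (swap a b p)
  then show ?case
    using assms(2,3) by blast
qed

lemma split_list_at_two:
  assumes "j < k" "k < length s"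
  obtains A B C where "s = A @ s ! j # B @ s ! k # C" "length A = j" "Suc (j + length B) = k"
proof
  have "drop (Suc j) s = take (k - Suc j) (drop (Suc j) s) @ drop k s"
    using assms(1) by (metis append_take_drop_id drop_drop Suc_leI le_add_diff_inverse2)
  then show "s = take j s @ s ! j # take (k - Suc j) (drop (Suc j) s) @ s ! k # drop (Suc k) s"
    using assms by (metis Cons_nth_drop_Suc append_take_drop_id order.strict_trans)
qed (use assms in auto)

lemma act_Nil [simp]: "act s [] = s"
  by (simp add: act_def)

lemma act_Cons [simp]: "act s (g # w) = act (act_gen s g) w"
  by (simp add: act_def)

lemma act_append: "act s (v @ w) = act (act s v) w"
  by (simp add: act_def)

lemma braid_perm_append: "braid_perm (v @ w) = braid_perm v \<circ> braid_perm w"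
  by (induction v) auto

lemma braid_word_append [simp]: "braid_word n (v @ w) \<longleftrightarrow> braid_word n v \<and> braid_word n w"
  by (auto simp: braid_word_def)

lemma act_pull_left:
  "act (A @ B @ y # C) (map (\<lambda>i. (i, True)) (rev [length A..<length A + length B]))
     = A @ y # map (\<lambda>c. qop c y) B @ C"
proof (induction B arbitrary: C rule: rev_induct)
  case Nil
  then show ?case by simp
next
  case (snoc b B)
  have "act_gen (A @ (B @ [b]) @ y # C) (length A + length B, True) = A @ B @ y # qop b y # C"
    by (simp add: nth_append list_update_append)
  then show ?case
    using snoc by simp
qed

lemma act_push_right:
  "act (A @ z # B @ C) (map (\<lambda>i. (i, False)) [length A..<length A + length B])
     = A @ map (\<lambda>c. qinv c z) B @ z # C"
proof (induction B arbitrary: A)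
  case Nil
  then show ?case by simp
next
  case (Cons b B)
  have "[length A..<length A + length (b # B)]
          = length A # [length (A @ [qinv b z])..<length (A @ [qinv b z]) + length B]"
    by (simp add: upt_rec)
  moreover have "act_gen (A @ z # (b # B) @ C) (length A, False) = (A @ [qinv b z]) @ z # B @ C"
    by (simp add: nth_append list_update_append)
  ultimately show ?case
    using Cons[of "A @ [qinv b z]"] by simp
qed

definition band :: "nat \<Rightarrow> nat \<Rightarrow> braid_word" where
  "band j k = map (\<lambda>i. (i, True)) (rev [Suc j..<k]) @ [(j, True)] @ map (\<lambda>i. (i, False)) [Suc j..<k]"

lemma braid_word_band: "j < k \<Longrightarrow> k < n \<Longrightarrow> braid_word n (band j k)"
  by (auto simp: band_def braid_word_def)

lemma braid_perm_band: "j < k \<Longrightarrow> braid_perm (band j k) = tr j k"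
proof (induction k)
  case (Suc k)
  show ?case
  proof (cases "j = k")
    case True
    then show ?thesis by (simp add: band_def)
  next
    case False
    with Suc.prems have "j < k" by simp
    then have "band j (Suc k) = (k, True) # band j k @ [(k, False)]"
      by (simp add: band_def)
    then have "braid_perm (band j (Suc k)) = tr (Suc k) k \<circ> tr k j \<circ> tr (Suc k) k"
      using Suc.IH \<open>j < k\<close> by (simp add: braid_perm_append transpose_commute comp_assoc)
    also have "\<dots> = tr (Suc k) j"
      using \<open>j < k\<close> by (intro transpose_comp_triple) auto
    also have "\<dots> = tr j (Suc k)"
      by (rule transpose_commute)
    finally show ?thesis .
  qed
qed simp

lemma act_band:
  assumes "length A = j" "Suc (j + length B) = k"
  shows "act (A @ x # B @ y # C) (band j k)
           = A @ y # map (\<lambda>e. qinv (qop e y) (qop x y)) B @ qop x y # C"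
proof -
  have "act ((A @ [x]) @ B @ y # C) (map (\<lambda>i. (i, True)) (rev [Suc j..<k]))
          = (A @ [x]) @ y # map (\<lambda>e. qop e y) B @ C"
    using act_pull_left[of "A @ [x]" B y C] assms by simp
  moreover have "act_gen ((A @ [x]) @ y # map (\<lambda>e. qop e y) B @ C) (j, True)
                   = (A @ [y]) @ qop x y # map (\<lambda>e. qop e y) B @ C"
    using assms by (simp add: nth_append list_update_append)
  moreover have "act ((A @ [y]) @ qop x y # map (\<lambda>e. qop e y) B @ C)
                   (map (\<lambda>i. (i, False)) [Suc j..<k])
                   = (A @ [y]) @ map (\<lambda>e. qinv (qop e y) (qop x y)) B @ qop x y # C"
    using act_push_right[of "A @ [y]" "qop x y" "map (\<lambda>e. qop e y) B" C] assms by simp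
  ultimately show ?thesis
    by (simp add: band_def act_append)
qed

lemma act_band_involutions:
  assumes "x \<circ> x = id" "y \<circ> y = id" "length A = j" "Suc (j + length B) = k"
  shows "act (A @ x # B @ y # C) (band j k)
           = A @ y # map (\<lambda>e. y \<circ> x \<circ> e \<circ> x \<circ> y) B @ (y \<circ> x \<circ> y) # C"
proof -
  have "(y \<circ> x \<circ> y) \<circ> (y \<circ> x \<circ> y) = id"
    using assms(1,2) by (simp add: comp_assoc) (simp flip: comp_assoc)
  then have "qinv (qop e y) (qop x y) = y \<circ> x \<circ> e \<circ> x \<circ> y" for e
    using assms(1,2) by (simp add: qop_def qinv_def inv_involution comp_assoc) (simp flip: comp_assoc)
  moreover have "qop x y = y \<circ> x \<circ> y"
    using assms(2) by (simp add: qop_def inv_involution)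
  ultimately show ?thesis
    using act_band[OF assms(3,4)] by simp
qed

lemma act_band_cube_braid:
  assumes invol: "x \<circ> x = id" "y \<circ> y = id" and braid: "x \<circ> y \<circ> x = y \<circ> x \<circ> y"
    and lens: "length A = j" "Suc (j + length B) = k"
  shows "act (A @ x # B @ y # C) (band j k @ band j k @ band j k) = A @ x # B @ y # C"
proof -
  \<comment> \<open>the end entries cycle through (x, y), (y, z), (z, x), (x, y)\<close>
  define z where "z = y \<circ> x \<circ> y"
  have cancel: "f \<circ> x \<circ> x = f" "f \<circ> y \<circ> y = f" for f
    using invol by (simp_all add: comp_involution_cancel)
  have z_invol: "z \<circ> z = id"
    using invol by (simp add: z_def cancel flip: comp_assoc)
  have "z \<circ> y \<circ> z = y \<circ> x \<circ> y \<circ> x \<circ> y"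
    by (simp add: z_def cancel flip: comp_assoc)
  then have zyz: "z \<circ> y \<circ> z = x"
    by (simp add: cancel flip: braid)
  have xzx: "x \<circ> z \<circ> x = y"
    by (simp add: z_def cancel braid flip: comp_assoc)
  let ?B1 = "map (\<lambda>e. y \<circ> x \<circ> e \<circ> x \<circ> y) B"
  let ?B2 = "map (\<lambda>e. z \<circ> y \<circ> e \<circ> y \<circ> z) ?B1"
  let ?B3 = "map (\<lambda>e. x \<circ> z \<circ> e \<circ> z \<circ> x) ?B2"
  have "act (A @ x # B @ y # C) (band j k) = A @ y # ?B1 @ z # C"
    using act_band_involutions[OF invol lens] by (simp add: z_def)
  moreover have "act (A @ y # ?B1 @ z # C) (band j k) = A @ z # ?B2 @ x # C"
    using act_band_involutions[of y z A j ?B1 k] invol z_invol lens zyz by simp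
  moreover have "act (A @ z # ?B2 @ x # C) (band j k) = A @ x # ?B3 @ y # C"
    using act_band_involutions[of z x A j ?B2 k] invol z_invol lens xzx by simp
  moreover have "?B3 = B"
  proof -
    have "x \<circ> z \<circ> (z \<circ> y \<circ> (y \<circ> x \<circ> e \<circ> x \<circ> y) \<circ> y \<circ> z) \<circ> z \<circ> x = e" for e
      using invol z_invol by (simp add: comp_involution_cancel flip: comp_assoc)
    then show ?thesis
      unfolding map_map by (intro map_idI) simp
  qed
  ultimately show ?thesis
    by (simp add: act_append)
qed

definition stabilizer_perms :: "(nat \<Rightarrow> nat) list \<Rightarrow> (nat \<Rightarrow> nat) set" where
  "stabilizer_perms s = {braid_perm w | w. braid_word (length s) w \<and> act s w = s}"

lemma braid_perm_in_stabilizer_perms: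
  "braid_word (length s) w \<Longrightarrow> act s w = s \<Longrightarrow> braid_perm w \<in> stabilizer_perms s"
  unfolding stabilizer_perms_def by blast

lemma id_in_stabilizer_perms: "id \<in> stabilizer_perms s"
  using braid_perm_in_stabilizer_perms[of s "[]"] by (simp add: braid_word_def)

lemma comp_in_stabilizer_perms:
  assumes "p \<in> stabilizer_perms s" "q \<in> stabilizer_perms s"
  shows "p \<circ> q \<in> stabilizer_perms s"
proof -
  obtain v w where "braid_word (length s) v" "act s v = s" "p = braid_perm v"
    and "braid_word (length s) w" "act s w = s" "q = braid_perm w"
    using assms unfolding stabilizer_perms_def by blast
  then show ?thesis
    using braid_perm_in_stabilizer_perms[of s "v @ w"] by (simp add: act_append braid_perm_append)
qed

lemma transpose_in_stabilizer_perms: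
  assumes "j < k" "k < length s"
    and "s ! j \<circ> s ! j = id" "s ! k \<circ> s ! k = id"
    and "s ! j \<circ> s ! k \<circ> s ! j = s ! k \<circ> s ! j \<circ> s ! k"
  shows "tr j k \<in> stabilizer_perms s"
proof -
  obtain A B C where s: "s = A @ s ! j # B @ s ! k # C" and lens: "length A = j" "Suc (j + length B) = k"
    using split_list_at_two assms(1,2) by blast
  let ?b = "band j k"
  have "act (A @ s ! j # B @ s ! k # C) (?b @ ?b @ ?b) = A @ s ! j # B @ s ! k # C"
    by (rule act_band_cube_braid[OF assms(3-5) lens])
  then have "act s (?b @ ?b @ ?b) = s"
    by (simp only: s[symmetric])
  moreover have "braid_perm (?b @ ?b @ ?b) = tr j k"
    using assms(1) by (simp add: braid_perm_append braid_perm_band comp_involution_cancel flip: comp_assoc)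
  moreover have "braid_word (length s) (?b @ ?b @ ?b)"
    using assms(1,2) by (simp add: braid_word_band)
  ultimately show ?thesis
    using braid_perm_in_stabilizer_perms by metis
qed

definition overlapping :: "(nat \<Rightarrow> nat) \<Rightarrow> (nat \<Rightarrow> nat) \<Rightarrow> bool" where
  "overlapping x y \<longleftrightarrow> (\<exists>v. x v \<noteq> v \<and> y v \<noteq> v)"

lemma transpose_eq_transpose_moved: "tr a b v \<noteq> v \<Longrightarrow> tr a b = tr v (tr a b v)"
  by (cases "v = a"; cases "v = b") (auto simp: transpose_commute)

lemma overlapping_transpose_braid:
  assumes "overlapping (tr a b) (tr c d)"
  shows "tr a b \<circ> tr c d \<circ> tr a b = tr c d \<circ> tr a b \<circ> tr c d"
proof -
  obtain v where "tr a b v \<noteq> v" "tr c d v \<noteq> v"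
    using assms unfolding overlapping_def by blast
  then obtain u w where uw: "tr a b = tr v u" "tr c d = tr v w" "u \<noteq> v" "w \<noteq> v"
    using transpose_eq_transpose_moved by metis
  show ?thesis
  proof (cases "u = w")
    case False
    have "tr a b \<circ> tr c d \<circ> tr a b = tr u w"
      using uw transpose_comp_triple[of u w v] False by (metis transpose_commute)
    moreover have "tr c d \<circ> tr a b \<circ> tr c d = tr w u"
      using uw transpose_comp_triple[of w u v] False by (metis transpose_commute)
    ultimately show ?thesis
      by (simp add: transpose_commute)
  qed (use uw in simp)
qed

lemma transp_quandle_nthE:
  assumes "set s \<subseteq> transp_quandle m" "l < length s"
  obtains a b where "s ! l = tr a b" "a < m" "b < m" "a \<noteq> b"
  using assms nth_mem[OF assms(2)] unfolding transp_quandle_def by blast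

lemma transpose_in_stabilizer_perms_if_overlapping:
  assumes "set s \<subseteq> transp_quandle m" "j < length s" "k < length s"
    and "overlapping (s ! j) (s ! k)"
  shows "tr j k \<in> stabilizer_perms s"
proof -
  have invol: "s ! i \<circ> s ! i = id" if "i < length s" for i
    using transp_quandle_nthE[OF assms(1) that] by (metis transpose_comp_involutory)
  obtain a b c d where "s ! j = tr a b" "s ! k = tr c d"
    using transp_quandle_nthE[OF assms(1,2)] transp_quandle_nthE[OF assms(1,3)] by metis
  then have braid: "s ! j \<circ> s ! k \<circ> s ! j = s ! k \<circ> s ! j \<circ> s ! k"
    using assms(4) overlapping_transpose_braid by simp
  consider "j < k" | "j = k" | "k < j"
    by linarith
  then show ?thesis
  proof cases
    case 1
    then show ?thesis
      using transpose_in_stabilizer_perms invol assms(2,3) braid by blast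
  next
    case 2
    then show ?thesis
      using id_in_stabilizer_perms by simp
  next
    case 3
    then have "tr k j \<in> stabilizer_perms s"
      using transpose_in_stabilizer_perms invol assms(2,3) braid by metis
    then show ?thesis
      by (simp add: transpose_commute)
  qed
qed

lemma qop_in_transp_quandle:
  assumes "x \<in> transp_quandle m" "y \<in> transp_quandle m"
  shows "qop x y \<in> transp_quandle m"
proof -
  obtain a b c d where ab: "x = tr a b" "a < m" "b < m" "a \<noteq> b"
    and cd: "y = tr c d" "c < m" "d < m"
    using assms unfolding transp_quandle_def by blast
  have "qop x y = tr (tr c d a) (tr c d b)"
    unfolding ab(1) cd(1) qop_def by (auto simp: fun_eq_iff Transposition.transpose_def)
  moreover have "tr c d a < m" "tr c d b < m" "tr c d a \<noteq> tr c d b"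
    using ab cd by (auto simp: Transposition.transpose_def dest: transpose_eq_imp_eq)
  ultimately show ?thesis
    unfolding transp_quandle_def by blast
qed

lemma qop_image_eq:
  assumes "bij y" "x ` V = V" "y ` V = V"
  shows "qop x y ` V = V"
proof -
  have "inv y ` V = V"
    using assms(3) image_inv_f_f[OF bij_is_inj[OF assms(1)], of V] by simp
  moreover have "qop x y ` V = inv y ` x ` y ` V"
    by (simp add: qop_def image_comp)
  ultimately show ?thesis
    using assms(2,3) by simp
qed

lemma generates_transp_quandle_image_eq:
  assumes "generates (transp_quandle m) s" "\<And>x. x \<in> set s \<Longrightarrow> x ` V = V"
    and "set s \<subseteq> transp_quandle m" "x \<in> transp_quandle m"
  shows "x ` V = V"
proof -
  define Y where "Y = {x \<in> transp_quandle m. x ` V = V}"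
  have "qop x y \<in> Y" if "x \<in> Y" "y \<in> Y" for x y
  proof -
    have "bij y"
      using that(2) unfolding Y_def transp_quandle_def by auto
    then show ?thesis
      using that qop_in_transp_quandle qop_image_eq unfolding Y_def by blast
  qed
  moreover have "set s \<subseteq> Y"
    using assms(2,3) unfolding Y_def by blast
  moreover have "Y \<subseteq> transp_quandle m"
    unfolding Y_def by blast
  ultimately have "Y = transp_quandle m"
    using assms(1) unfolding generates_def by blast
  then show ?thesis
    using assms(4) unfolding Y_def by blast
qed

lemma overlap_closed_positions_eq_all:
  assumes gen: "generates (transp_quandle m) s" and sX: "set s \<subseteq> transp_quandle m"
    and "i \<in> C" "C \<subseteq> {..<length s}"
    and closed: "\<And>j k. j \<in> C \<Longrightarrow> k < length s \<Longrightarrow> overlapping (s ! j) (s ! k) \<Longrightarrow> k \<in> C"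
  shows "C = {..<length s}"
proof (rule ccontr)
  assume "C \<noteq> {..<length s}"
  then obtain k where k: "k < length s" "k \<notin> C"
    using assms(4) by blast
  define V where "V = {v. \<exists>j\<in>C. (s ! j) v \<noteq> v}"
  have fixes_V: "(s ! l) v = v" if "l < length s" "l \<notin> C" "v \<in> V" for l v
    using closed that unfolding V_def overlapping_def by blast
  have "s ! l ` V = V" if l: "l < length s" for l
  proof (cases "l \<in> C")
    case True
    obtain a b where "s ! l = tr a b" "a \<noteq> b"
      using transp_quandle_nthE[OF sX l] by blast
    moreover from this have "a \<in> V" "b \<in> V"
      using True unfolding V_def by (auto intro!: bexI[of _ l])
    ultimately show ?thesis
      by simp
  next
    case False
    then show ?thesis
      using fixes_V[OF l] by simp
  qed
  then have invariant: "x ` V = V" if "x \<in> transp_quandle m" for x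
    using generates_transp_quandle_image_eq[OF gen _ sX that] by (metis in_set_conv_nth)
  obtain a b where "s ! i = tr a b" "a < m" "a \<noteq> b"
    using transp_quandle_nthE[OF sX] assms(3,4) by blast
  then have a: "a \<in> V" "a < m"
    using \<open>i \<in> C\<close> unfolding V_def by (auto intro!: bexI[of _ i])
  obtain c d where "s ! k = tr c d" "c < m" "c \<noteq> d"
    using transp_quandle_nthE[OF sX k(1)] by blast
  then have c: "c \<notin> V" "c < m"
    using fixes_V[OF k, of c] by auto
  have "tr a c ` V = V"
    using a c by (intro invariant) (auto simp: transp_quandle_def)
  moreover have "c \<in> tr a c ` V"
    using a(1) by (rule rev_image_eqI) simp
  ultimately show False
    using c(1) by blast
qed

theorem proposition4p40:
  fixes m n :: nat and s :: "(nat \<Rightarrow> nat) list"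
  assumes "m \<ge> 2" and "n \<ge> 1"
    and "length s = n" and "set s \<subseteq> transp_quandle m"
    and "generates (transp_quandle m) s"
  shows "\<forall>p. p permutes {0..<n} \<longrightarrow>
           (\<exists>w. braid_word n w \<and> act s w = s \<and> braid_perm w = p)"
proof -
  let ?H = "stabilizer_perms s"
  note H_closed = id_in_stabilizer_perms comp_in_stabilizer_perms
  have "{k. k < n \<and> tr 0 k \<in> ?H} = {..<n}"
  proof (rule overlap_closed_positions_eq_all[OF assms(5,4), unfolded assms(3)])
    show "0 \<in> {k. k < n \<and> tr 0 k \<in> ?H}"
      using assms(2) id_in_stabilizer_perms by simp
  next
    fix j k
    assume "j \<in> {k. k < n \<and> tr 0 k \<in> ?H}" "k < n" "overlapping (s ! j) (s ! k)"
    then show "k \<in> {k. k < n \<and> tr 0 k \<in> ?H}"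
      using transpose_in_stabilizer_perms_if_overlapping[OF assms(4)] assms(3)
        transpose_in_trans[OF H_closed] by auto
  qed auto
  then have star: "tr 0 k \<in> ?H" if "k < n" for k
    using that by blast
  have "tr j k \<in> ?H" if "j < n" "k < n" for j k
    using star[OF that(1)] star[OF that(2)] transpose_in_trans[OF H_closed, where a = j and b = 0]
    by (metis transpose_commute)
  then have "p \<in> ?H" if "p permutes {0..<n}" for p
    using permutes_in_if_transpositions_in[OF H_closed _ _ that] by simp
  then show ?thesis
    using assms(3) unfolding stabilizer_perms_def by blast
qed

end
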